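(* Let $\sigma>0$ and $k\in\mathbb{N}$ be such that $k^2\sigma\le1$. Then $\mathcal K_G^\sigma T_k$ is a polynomial of degree $k$ that satisfies \[ \|T_k-\mathcal K_G^\sigma T_k\|_\infty\le\tfrac12k^4\sigma^2\quad\text{and}\quad\|\mathcal K_G^\sigma T_k-T_k\|_{1,\mathrm{cheb}}\le k^{9/2}\sigma^2. \]
   Context: $T_k(x)=\cos(k\arccos x)$ is the Chebyshev polynomial of the first kind (as a polynomial on $\mathbb{R}$). $\mathcal K_G^\sigma(f)(x)=\int_{\mathbb{R}}\frac1{\sqrt{2\pi}\sigma}\exp\!\left(-\frac{(x-y)^2}{2\sigma^2}\right)f(y)\,dy$. $\|g\|_\infty=\sup_{x\in[-1,1]}|g(x)|$; for a univariate polynomial $p=\sum_jc_jT_j$, $\|p\|_{1,\mathrm{cheb}}=\sum_j|c_j|$. *)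

theory Defs
  imports "HOL-Analysis.Analysis" "HOL-Computational_Algebra.Polynomial"
begin

definition cheb_T :: "nat \<Rightarrow> real poly" where
  "cheb_T k = (THE p. \<forall>x\<in>{-1..1}. poly p x = cos (real k * arccos x))"

definition gauss_conv :: "real \<Rightarrow> (real \<Rightarrow> real) \<Rightarrow> real \<Rightarrow> real" where
  "gauss_conv \<sigma> f x =
     integral UNIV (\<lambda>y. (1 / (sqrt (2 * pi) * \<sigma>)) * exp (- ((x - y)^2) / (2 * \<sigma>^2)) * f y)"

definition sup_norm_11 :: "(real \<Rightarrow> real) \<Rightarrow> real" where
  "sup_norm_11 g = (SUP x\<in>{-1..1}. \<bar>g x\<bar>)"

definition cheb_coeff :: "real poly \<Rightarrow> nat \<Rightarrow> real" where
  "cheb_coeff p = (THE c. (\<forall>j>degree p. c j = 0) \<and>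
                        p = (\<Sum>j\<le>degree p. smult (c j) (cheb_T j)))"

definition cheb_norm1 :: "real poly \<Rightarrow> real" where
  "cheb_norm1 p = (\<Sum>j\<le>degree p. \<bar>cheb_coeff p j\<bar>)"

end

theory Submission
  imports Defs "HOL-Probability.Probability"
begin

text \<open>
  Expanding a polynomial in its Taylor series around x and integrating the Gaussian moments
  gives K T_k = T_k + D with D = sum_{j=1..k} sigma^(2j) / (2^j j!) T_k^(2j). Since
  T_n' = n U_(n-1) and U_n = U_(n-2) + 2 T_n, every derivative of T_k, and hence D, is a
  nonnegative combination of T_0, ..., T_k. For such a combination p both the sup norm on
  [-1, 1] and the Chebyshev 1-norm equal p(1), because |T_j| <= 1 = T_j(1) there, and
  p'(1) <= k^2 p(1) because T_j'(1) = j^2. Hence T_k^(m)(1) <= k^(2m), and with k^2 sigma <= 1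
  the series D(1) is at most k^4 sigma^2 / 2, which is also below k^(9/2) sigma^2.
\<close>

lemma smult_numeral: "smult (numeral n) p = numeral n * (p :: 'a::comm_semiring_1 poly)"
  by (simp add: numeral_poly)

lemma pCons_0_numeral: "[:0, numeral n:] = numeral n * ([:0, 1:] :: 'a::comm_semiring_1 poly)"
  by (simp add: numeral_poly flip: smult_numeral)

lemma smult_sum_right: "smult a (sum f A) = (\<Sum>x\<in>A. smult a (f x))"
  by (induction A rule: infinite_finite_induct) (simp_all add: smult_add_right)

lemma pderiv_sum: "pderiv (sum f A) = (\<Sum>x\<in>A. pderiv (f x))"
  using higher_pderiv_sum[of 1 f A] by simp

lemma higher_pderiv_eq_0: "degree p < m \<Longrightarrow> (pderiv ^^ m) p = 0"
  by (intro poly_eqI) (simp add: coeff_higher_pderiv coeff_eq_0)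

lemma poly_eq_taylor_sum:
  fixes p :: "real poly"
  assumes "degree p < n"
  shows "poly p y = (\<Sum>m<n. poly ((pderiv ^^ m) p) x / fact m * (y - x) ^ m)"
proof -
  define diff where "diff m h = poly ((pderiv ^^ m) p) (h + x)" for m h
  have "DERIV (diff m) h :> diff (Suc m) h" for m h
    using poly_DERIV[of "(pderiv ^^ m) p" "h + x"] unfolding diff_def by (simp add: DERIV_shift)
  then obtain t where "poly p (y - x + x)
      = (\<Sum>m<n. diff m 0 / fact m * (y - x) ^ m) + diff n t / fact n * (y - x) ^ n"
    using Maclaurin_all_le[of diff "\<lambda>h. poly p (h + x)" "y - x" n] unfolding diff_def by auto
  then show ?thesis
    using higher_pderiv_eq_0[OF assms] unfolding diff_def by simp
qed

section \<open>Chebyshev polynomials\<close>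

fun chebyshev_T :: "nat \<Rightarrow> real poly" where
  "chebyshev_T 0 = 1"
| "chebyshev_T (Suc 0) = [:0, 1:]"
| "chebyshev_T (Suc (Suc n)) = [:0, 2:] * chebyshev_T (Suc n) - chebyshev_T n"

fun chebyshev_U :: "nat \<Rightarrow> real poly" where
  "chebyshev_U 0 = 1"
| "chebyshev_U (Suc 0) = [:0, 2:]"
| "chebyshev_U (Suc (Suc n)) = [:0, 2:] * chebyshev_U (Suc n) - chebyshev_U n"

lemma chebyshev_T_Suc_eq_U: "chebyshev_T (Suc n) = chebyshev_U (Suc n) - [:0, 1:] * chebyshev_U n"
proof (induction n rule: chebyshev_T.induct)
  case (3 n)
  show ?case
    by (simp only: chebyshev_T.simps(3)[of "Suc n"] 3 chebyshev_U.simps(3) pCons_0_numeral) algebra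
qed (simp only: chebyshev_T.simps chebyshev_U.simps pCons_0_numeral; algebra)+

lemma chebyshev_U_Suc_Suc_eq_T:
  "chebyshev_U (Suc (Suc n)) = chebyshev_U n + smult 2 (chebyshev_T (Suc (Suc n)))"
  by (simp only: chebyshev_T_Suc_eq_U chebyshev_U.simps(3) pCons_0_numeral smult_numeral) algebra

lemma pderiv_chebyshev_T: "pderiv (chebyshev_T (Suc n)) = smult (real (Suc n)) (chebyshev_U n)"
proof (induction n rule: chebyshev_T.induct)
  case (3 n)
  have T: "poly (chebyshev_T (Suc (Suc n))) x
      = x * poly (chebyshev_U (Suc n)) x - poly (chebyshev_U n) x" for x
    using chebyshev_T_Suc_eq_U[of "Suc n"] by (simp del: chebyshev_T.simps)
  have "poly (pderiv (chebyshev_T (Suc (Suc (Suc n))))) x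
      = poly (smult (real (Suc (Suc (Suc n)))) (chebyshev_U (Suc (Suc n)))) x" for x
    using 3
    by (simp del: chebyshev_T.simps add: T chebyshev_T.simps(3)[of "Suc n"] pderiv_mult pderiv_diff
        pderiv_pCons pderiv_smult algebra_simps)
  then show ?case
    by (rule poly_ext)
qed (simp_all add: pderiv_mult pderiv_diff pderiv_pCons)

lemma poly_chebyshev_T_cos: "poly (chebyshev_T n) (cos t) = cos (real n * t)"
proof (induction n rule: chebyshev_T.induct)
  case (3 n)
  have "cos (real (Suc (Suc n)) * t) = 2 * cos t * cos (real (Suc n) * t) - cos (real n * t)"
  proof -
    have "real (Suc (Suc n)) * t = real (Suc n) * t + t" "real n * t = real (Suc n) * t - t"
      by (simp_all add: algebra_simps)
    then show ?thesis by (simp only: cos_add cos_diff) simp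
  qed
  with 3 show ?case by simp
qed simp_all

lemma abs_poly_chebyshev_T_le: "x \<in> {-1..1} \<Longrightarrow> \<bar>poly (chebyshev_T n) x\<bar> \<le> 1"
  using poly_chebyshev_T_cos[of n "arccos x"] by (simp add: cos_arccos)

lemma poly_chebyshev_T_one [simp]: "poly (chebyshev_T n) 1 = 1"
  using poly_chebyshev_T_cos[of n 0] by simp

lemma poly_chebyshev_U_one [simp]: "poly (chebyshev_U n) 1 = real n + 1"
  by (induction n rule: chebyshev_U.induct) simp_all

lemma poly_pderiv_chebyshev_U_one:
  "3 * poly (pderiv (chebyshev_U n)) 1 = real n * (real n + 1) * (real n + 2)"
  by (induction n rule: chebyshev_U.induct)
     (simp_all add: pderiv_mult pderiv_diff pderiv_pCons pderiv_smult algebra_simps)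

lemma poly_pderiv_chebyshev_T_one: "poly (pderiv (chebyshev_T j)) 1 = real j ^ 2"
  by (cases j) (simp_all add: pderiv_chebyshev_T power2_eq_square)

lemma poly_pderiv2_chebyshev_T_one:
  "3 * poly (pderiv (pderiv (chebyshev_T k))) 1 = real k ^ 2 * (real k ^ 2 - 1)"
proof (cases k)
  case (Suc n)
  then show ?thesis
    using poly_pderiv_chebyshev_U_one[of n]
    by (simp add: pderiv_chebyshev_T pderiv_smult algebra_simps power2_eq_square)
qed simp

lemma chebyshev_T_degree_nonzero: "degree (chebyshev_T n) = n \<and> chebyshev_T n \<noteq> 0"
proof (induction n rule: chebyshev_T.induct)
  case (3 n)
  have "degree ([:0, 2:] * chebyshev_T (Suc n)) = Suc (Suc n)"
    using 3 by (subst degree_mult_eq) auto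
  moreover have "degree (chebyshev_T n) < Suc (Suc n)"
    using 3 by simp
  ultimately have "degree (chebyshev_T (Suc (Suc n))) = Suc (Suc n)"
    by (metis chebyshev_T.simps(3) degree_add_eq_left degree_minus diff_conv_add_uminus)
  then show ?case
    by auto
qed simp_all

lemmas degree_chebyshev_T [simp] = chebyshev_T_degree_nonzero[THEN conjunct1]

lemmas chebyshev_T_nonzero [simp] = chebyshev_T_degree_nonzero[THEN conjunct2]

lemma coeff_chebyshev_T_self_nonzero [simp]: "coeff (chebyshev_T n) n \<noteq> 0"
  using leading_coeff_0_iff[of "chebyshev_T n"] by simp

lemma cheb_T_eq_chebyshev_T: "cheb_T = chebyshev_T"
proof
  fix k
  have agree: "\<forall>x\<in>{-1..1}. poly (chebyshev_T k) x = cos (real k * arccos x)"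
  proof
    fix x :: real
    assume "x \<in> {-1..1}"
    then show "poly (chebyshev_T k) x = cos (real k * arccos x)"
      using poly_chebyshev_T_cos[of k "arccos x"] by (simp add: cos_arccos)
  qed
  have "p = chebyshev_T k" if "\<forall>x\<in>{-1..1}. poly p x = cos (real k * arccos x)" for p
  proof (rule ccontr)
    assume "p \<noteq> chebyshev_T k"
    then have "finite {x. poly (p - chebyshev_T k) x = 0}"
      using poly_roots_finite[of "p - chebyshev_T k"] by simp
    moreover have "{-1..1::real} \<subseteq> {x. poly (p - chebyshev_T k) x = 0}"
      using that agree by auto
    ultimately have "finite {-1..1::real}"
      by (rule finite_subset[rotated])
    then show False
      using infinite_Icc[of "-1" "1::real"] by simp
  qed
  with agree show "cheb_T k = chebyshev_T k"
    unfolding cheb_T_def by (rule the_equality)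
qed

section \<open>Chebyshev expansions\<close>

lemma coeff_chebyshev_sum_top:
  "coeff (\<Sum>j\<le>N. smult (c j) (chebyshev_T j)) N = c N * coeff (chebyshev_T N) N"
proof -
  have "coeff (\<Sum>j\<le>N. smult (c j) (chebyshev_T j)) N = (\<Sum>j\<le>N. c j * coeff (chebyshev_T j) N)"
    by (simp add: coeff_sum)
  also have "\<dots> = c N * coeff (chebyshev_T N) N"
    by (subst sum.remove[of _ N]) (auto intro!: sum.neutral coeff_eq_0)
  finally show ?thesis .
qed

lemma chebyshev_T_linear_independent:
  "(\<Sum>j\<le>N. smult (c j) (chebyshev_T j)) = 0 \<Longrightarrow> j \<le> N \<Longrightarrow> c j = 0"
proof (induction N)
  case (Suc N)
  from coeff_chebyshev_sum_top[of c "Suc N"] Suc.prems(1) have "c (Suc N) = 0"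
    by (metis coeff_0 coeff_chebyshev_T_self_nonzero mult_eq_0_iff)
  with Suc show ?case
    by (cases "j = Suc N") auto
qed (use coeff_chebyshev_sum_top[of c 0] in simp)

lemma le_degree_chebyshev_sum:
  "j \<le> N \<Longrightarrow> c j \<noteq> 0 \<Longrightarrow> j \<le> degree (\<Sum>j\<le>N. smult (c j) (chebyshev_T j))"
proof (induction N)
  case (Suc N)
  show ?case
  proof (cases "c (Suc N) = 0")
    case True
    with Suc show ?thesis
      by (cases "j = Suc N") auto
  next
    case False
    then have "Suc N \<le> degree (\<Sum>j\<le>Suc N. smult (c j) (chebyshev_T j))"
      by (intro le_degree) (simp only: coeff_chebyshev_sum_top, simp)
    with Suc.prems show ?thesis
      by linarith
  qed
qed simp

lemma cheb_coeff_chebyshev_sum: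
  "cheb_coeff (\<Sum>j\<le>N. smult (c j) (chebyshev_T j)) = (\<lambda>j. if j \<le> N then c j else 0)"
proof -
  define p where "p = (\<Sum>j\<le>N. smult (c j) (chebyshev_T j))"
  define d where "d j = (if j \<le> N then c j else 0)" for j
  have d_vanish: "d j = 0" if "degree p < j" for j
    using le_degree_chebyshev_sum[of j N c] that unfolding p_def d_def by (metis not_le)
  have expansion: "p = (\<Sum>j\<le>degree p. smult (d j) (chebyshev_T j))"
  proof -
    have "p = (\<Sum>j\<le>max N (degree p). smult (d j) (chebyshev_T j))"
      unfolding p_def d_def by (intro sum.mono_neutral_cong_left) auto
    also have "\<dots> = (\<Sum>j\<le>degree p. smult (d j) (chebyshev_T j))"
      by (intro sum.mono_neutral_right) (auto simp: d_vanish)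
    finally show ?thesis .
  qed
  have "e = d"
    if e: "(\<forall>j>degree p. e j = 0) \<and> p = (\<Sum>j\<le>degree p. smult (e j) (cheb_T j))" for e
  proof
    fix j
    have "(\<Sum>i\<le>degree p. smult (e i - d i) (chebyshev_T i))
        = (\<Sum>i\<le>degree p. smult (e i) (chebyshev_T i))
          - (\<Sum>i\<le>degree p. smult (d i) (chebyshev_T i))"
      by (simp add: smult_diff_left sum_subtractf)
    also have "\<dots> = 0"
      using e expansion by (simp add: cheb_T_eq_chebyshev_T)
    finally show "e j = d j"
      using e d_vanish chebyshev_T_linear_independent[of "\<lambda>i. e i - d i" "degree p" j]
      by (cases "j \<le> degree p") auto
  qed
  then have "cheb_coeff p = d"
    unfolding cheb_coeff_def using d_vanish expansion
    by (intro the_equality) (auto simp: cheb_T_eq_chebyshev_T)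
  then show ?thesis
    unfolding p_def d_def .
qed

lemma cheb_norm1_chebyshev_sum:
  "cheb_norm1 (\<Sum>j\<le>N. smult (c j) (chebyshev_T j)) = (\<Sum>j\<le>N. \<bar>c j\<bar>)"
  (is "cheb_norm1 ?p = _")
proof -
  have "cheb_norm1 ?p = (\<Sum>j\<le>degree ?p. \<bar>if j \<le> N then c j else 0\<bar>)"
    unfolding cheb_norm1_def cheb_coeff_chebyshev_sum ..
  also have "\<dots> = (\<Sum>j\<le>max N (degree ?p). \<bar>if j \<le> N then c j else 0\<bar>)"
    using le_degree_chebyshev_sum[of _ N c] by (intro sum.mono_neutral_left) (auto simp: not_le)
  also have "\<dots> = (\<Sum>j\<le>N. \<bar>c j\<bar>)"
    by (intro sum.mono_neutral_cong_right) auto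
  finally show ?thesis .
qed

section \<open>Nonnegative Chebyshev combinations\<close>

definition nonneg_cheb_comb :: "nat \<Rightarrow> real poly \<Rightarrow> bool" where
  "nonneg_cheb_comb N p \<longleftrightarrow>
     (\<exists>c. (\<forall>j. 0 \<le> c j) \<and> p = (\<Sum>j\<le>N. smult (c j) (chebyshev_T j)))"

lemma nonneg_cheb_comb_0: "nonneg_cheb_comb N 0"
  unfolding nonneg_cheb_comb_def by (intro exI[of _ "\<lambda>_. 0"]) simp

lemma nonneg_cheb_comb_chebyshev_T: "j \<le> N \<Longrightarrow> nonneg_cheb_comb N (chebyshev_T j)"
  unfolding nonneg_cheb_comb_def
  by (intro exI[of _ "\<lambda>i. if i = j then 1 else 0"])
     (simp add: if_distrib[of "\<lambda>c. smult c _"] cong: if_cong)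

lemma nonneg_cheb_comb_add:
  assumes "nonneg_cheb_comb N p" and "nonneg_cheb_comb N q"
  shows "nonneg_cheb_comb N (p + q)"
proof -
  from assms obtain c d where
    "\<forall>j. 0 \<le> c j" "p = (\<Sum>j\<le>N. smult (c j) (chebyshev_T j))"
    "\<forall>j. 0 \<le> d j" "q = (\<Sum>j\<le>N. smult (d j) (chebyshev_T j))"
    unfolding nonneg_cheb_comb_def by blast
  then show ?thesis
    unfolding nonneg_cheb_comb_def
    by (intro exI[of _ "\<lambda>j. c j + d j"]) (simp add: smult_add_left sum.distrib)
qed

lemma nonneg_cheb_comb_smult:
  assumes "nonneg_cheb_comb N p" and "0 \<le> a"
  shows "nonneg_cheb_comb N (smult a p)"
proof -
  from assms(1) obtain c where "\<forall>j. 0 \<le> c j" "p = (\<Sum>j\<le>N. smult (c j) (chebyshev_T j))"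
    unfolding nonneg_cheb_comb_def by blast
  with assms(2) show ?thesis
    unfolding nonneg_cheb_comb_def
    by (intro exI[of _ "\<lambda>j. a * c j"]) (simp add: smult_sum_right)
qed

lemma nonneg_cheb_comb_mono:
  assumes "nonneg_cheb_comb N p" and "N \<le> M"
  shows "nonneg_cheb_comb M p"
proof -
  from assms(1) obtain c where c: "\<forall>j. 0 \<le> c j" "p = (\<Sum>j\<le>N. smult (c j) (chebyshev_T j))"
    unfolding nonneg_cheb_comb_def by blast
  have "(\<Sum>j\<le>M. smult (if j \<le> N then c j else 0) (chebyshev_T j)) = p"
    unfolding c(2) using assms(2) by (intro sum.mono_neutral_cong_right) auto
  with c(1) show ?thesis
    unfolding nonneg_cheb_comb_def by (intro exI[of _ "\<lambda>j. if j \<le> N then c j else 0"]) auto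
qed

lemma nonneg_cheb_comb_sum:
  "finite A \<Longrightarrow> (\<And>i. i \<in> A \<Longrightarrow> nonneg_cheb_comb N (f i)) \<Longrightarrow> nonneg_cheb_comb N (sum f A)"
  by (induction A rule: finite_induct) (auto intro: nonneg_cheb_comb_0 nonneg_cheb_comb_add)

lemma nonneg_cheb_comb_chebyshev_U: "nonneg_cheb_comb n (chebyshev_U n)"
proof (induction n rule: chebyshev_U.induct)
  case 1
  show ?case
    using nonneg_cheb_comb_chebyshev_T[of 0 0] by simp
next
  case 2
  show ?case
    using nonneg_cheb_comb_smult[OF nonneg_cheb_comb_chebyshev_T[of 1 1], of 2] by simp
next
  case (3 n)
  have "nonneg_cheb_comb (Suc (Suc n)) (chebyshev_U n)"
    using "3.IH"(2) by (rule nonneg_cheb_comb_mono) simp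
  moreover have "nonneg_cheb_comb (Suc (Suc n)) (smult 2 (chebyshev_T (Suc (Suc n))))"
    by (intro nonneg_cheb_comb_smult nonneg_cheb_comb_chebyshev_T) auto
  ultimately show ?case
    unfolding chebyshev_U_Suc_Suc_eq_T by (rule nonneg_cheb_comb_add)
qed

lemma nonneg_cheb_comb_pderiv:
  assumes "nonneg_cheb_comb N p"
  shows "nonneg_cheb_comb N (pderiv p)"
proof -
  from assms obtain c where c: "\<forall>j. 0 \<le> c j" "p = (\<Sum>j\<le>N. smult (c j) (chebyshev_T j))"
    unfolding nonneg_cheb_comb_def by blast
  have "nonneg_cheb_comb N (pderiv (chebyshev_T j))" if "j \<le> N" for j
  proof (cases j)
    case (Suc m)
    with that have "nonneg_cheb_comb N (chebyshev_U m)"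
      by (intro nonneg_cheb_comb_mono[OF nonneg_cheb_comb_chebyshev_U]) simp
    then show ?thesis
      unfolding Suc pderiv_chebyshev_T by (rule nonneg_cheb_comb_smult) simp
  qed (simp add: nonneg_cheb_comb_0)
  then have "nonneg_cheb_comb N (\<Sum>j\<le>N. smult (c j) (pderiv (chebyshev_T j)))"
    using c(1) by (intro nonneg_cheb_comb_sum nonneg_cheb_comb_smult) auto
  then show ?thesis
    using c(2) by (simp add: pderiv_sum pderiv_smult)
qed

lemma nonneg_cheb_comb_higher_pderiv:
  "nonneg_cheb_comb N p \<Longrightarrow> nonneg_cheb_comb N ((pderiv ^^ m) p)"
  by (induction m) (auto intro: nonneg_cheb_comb_pderiv)

lemma nonneg_cheb_comb_abs_poly_le:
  assumes "nonneg_cheb_comb N p" and x: "x \<in> {-1..1}"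
  shows "\<bar>poly p x\<bar> \<le> poly p 1"
proof -
  from assms(1) obtain c where c: "\<forall>j. 0 \<le> c j" "p = (\<Sum>j\<le>N. smult (c j) (chebyshev_T j))"
    unfolding nonneg_cheb_comb_def by blast
  have "\<bar>poly p x\<bar> = \<bar>\<Sum>j\<le>N. c j * poly (chebyshev_T j) x\<bar>"
    using c(2) by (simp add: poly_sum)
  also have "\<dots> \<le> (\<Sum>j\<le>N. \<bar>c j * poly (chebyshev_T j) x\<bar>)"
    by (rule sum_abs)
  also have "\<dots> \<le> (\<Sum>j\<le>N. c j)"
    using c(1) abs_poly_chebyshev_T_le[OF x]
    by (intro sum_mono) (simp add: abs_mult mult_left_le)
  also have "\<dots> = poly p 1"
    using c(2) by (simp add: poly_sum)
  finally show ?thesis .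
qed

lemma cheb_norm1_nonneg_cheb_comb:
  assumes "nonneg_cheb_comb N p"
  shows "cheb_norm1 p = poly p 1"
proof -
  from assms obtain c where "\<forall>j. 0 \<le> c j" "p = (\<Sum>j\<le>N. smult (c j) (chebyshev_T j))"
    unfolding nonneg_cheb_comb_def by blast
  then show ?thesis
    by (simp add: cheb_norm1_chebyshev_sum poly_sum)
qed

lemma nonneg_cheb_comb_poly_pderiv_one_le:
  assumes "nonneg_cheb_comb N p"
  shows "poly (pderiv p) 1 \<le> real N ^ 2 * poly p 1"
proof -
  from assms obtain c where c: "\<forall>j. 0 \<le> c j" "p = (\<Sum>j\<le>N. smult (c j) (chebyshev_T j))"
    unfolding nonneg_cheb_comb_def by blast
  have "poly (pderiv p) 1 = (\<Sum>j\<le>N. c j * real j ^ 2)"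
    using c(2) by (simp add: poly_sum pderiv_sum pderiv_smult poly_pderiv_chebyshev_T_one)
  also have "\<dots> \<le> (\<Sum>j\<le>N. c j * real N ^ 2)"
    using c(1) by (intro sum_mono mult_left_mono power_mono) auto
  also have "\<dots> = real N ^ 2 * poly p 1"
    using c(2) by (simp add: poly_sum sum_distrib_right mult.commute)
  finally show ?thesis .
qed

lemma poly_higher_pderiv_chebyshev_T_one_le:
  "poly ((pderiv ^^ m) (chebyshev_T k)) 1 \<le> real k ^ (2 * m)"
proof (induction m)
  case (Suc m)
  have "nonneg_cheb_comb k ((pderiv ^^ m) (chebyshev_T k))"
    by (intro nonneg_cheb_comb_higher_pderiv nonneg_cheb_comb_chebyshev_T) simp
  then have "poly ((pderiv ^^ Suc m) (chebyshev_T k)) 1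
      \<le> real k ^ 2 * poly ((pderiv ^^ m) (chebyshev_T k)) 1"
    using nonneg_cheb_comb_poly_pderiv_one_le by simp
  also have "\<dots> \<le> real k ^ 2 * real k ^ (2 * m)"
    using Suc.IH by (rule mult_left_mono) simp
  finally show ?case
    by (simp add: power_add[symmetric])
qed simp

section \<open>Gaussian convolution of polynomials\<close>

lemma has_bochner_integral_normal_moment:
  assumes "\<sigma> > 0"
  shows "has_bochner_integral lborel (\<lambda>y. normal_density \<mu> \<sigma> y * (y - \<mu>) ^ n)
    (if even n then fact n / ((2 / \<sigma>\<^sup>2) ^ (n div 2) * fact (n div 2)) else 0)"
proof (cases "even n")
  case True
  then obtain k where "n = 2 * k"
    by blast
  with normal_moment_even[OF assms, of \<mu> k] show ?thesis
    by simp
next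
  case False
  then obtain k where "n = 2 * k + 1"
    using oddE by blast
  with normal_moment_odd[OF assms, of \<mu> k] show ?thesis
    by simp
qed

lemma gauss_conv_eq_normal_density:
  assumes "\<sigma> > 0"
  shows "gauss_conv \<sigma> f x = integral UNIV (\<lambda>y. normal_density x \<sigma> y * f y)"
proof -
  have "sqrt (2 * pi * \<sigma>\<^sup>2) = sqrt (2 * pi) * \<sigma>"
    using assms by (simp add: real_sqrt_mult)
  then have "1 / (sqrt (2 * pi) * \<sigma>) * exp (- ((x - y)^2) / (2 * \<sigma>^2)) = normal_density x \<sigma> y"
    for y
    by (simp add: normal_density_def power2_commute)
  then show ?thesis
    unfolding gauss_conv_def by simp
qed

lemma gauss_conv_poly:
  assumes "\<sigma> > 0" and "degree p < 2 * K"
  shows "gauss_conv \<sigma> (poly p) x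
    = (\<Sum>j<K. \<sigma> ^ (2 * j) / (2 ^ j * fact j) * poly ((pderiv ^^ (2 * j)) p) x)"
proof -
  define a where "a m = poly ((pderiv ^^ m) p) x / fact m" for m
  define moment :: "nat \<Rightarrow> real" where
    "moment m = (if even m then fact m / ((2 / \<sigma>\<^sup>2) ^ (m div 2) * fact (m div 2)) else 0)" for m
  have taylor: "normal_density x \<sigma> y * poly p y
      = (\<Sum>m<2 * K. a m * (normal_density x \<sigma> y * (y - x) ^ m))" for y
    unfolding poly_eq_taylor_sum[OF assms(2), of y x] a_def sum_distrib_left
    by (intro sum.cong) auto
  have moments: "has_bochner_integral lborel (\<lambda>y. normal_density x \<sigma> y * poly p y)
      (\<Sum>m<2 * K. a m * moment m)"
    unfolding taylor moment_def
    by (intro has_bochner_integral_sum has_bochner_integral_mult_right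
        has_bochner_integral_normal_moment assms(1))
  then have "((\<lambda>y. normal_density x \<sigma> y * poly p y) has_integral (\<Sum>m<2 * K. a m * moment m)) UNIV"
    using has_integral_integral_lborel[OF integrable.intros[OF moments]]
      has_bochner_integral_integral_eq[OF moments] by simp
  then have "gauss_conv \<sigma> (poly p) x = (\<Sum>m<2 * K. if even m then a m * moment m else 0)"
    unfolding gauss_conv_eq_normal_density[OF assms(1)] moment_def
    by (simp add: integral_unique if_distrib cong: if_cong)
  also have "\<dots> = (\<Sum>j<K. a (2 * j) * moment (2 * j))"
    by (simp add: sum_split_even_odd)
  also have "\<dots> = (\<Sum>j<K. \<sigma> ^ (2 * j) / (2 ^ j * fact j) * poly ((pderiv ^^ (2 * j)) p) x)"
    using assms(1) by (intro sum.cong) (simp_all add: a_def moment_def power_divide power_mult)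
  finally show ?thesis .
qed

section \<open>The Gaussian correction of a Chebyshev polynomial\<close>

definition gauss_correction :: "real \<Rightarrow> nat \<Rightarrow> real poly" where
  "gauss_correction \<sigma> k =
     (\<Sum>j\<in>{1..k}. smult (\<sigma> ^ (2 * j) / (2 ^ j * fact j)) ((pderiv ^^ (2 * j)) (chebyshev_T k)))"

lemma gauss_conv_chebyshev_T:
  assumes "\<sigma> > 0"
  shows "gauss_conv \<sigma> (poly (chebyshev_T k)) x = poly (chebyshev_T k + gauss_correction \<sigma> k) x"
proof -
  define t where "t j = \<sigma> ^ (2 * j) / (2 ^ j * fact j) * poly ((pderiv ^^ (2 * j)) (chebyshev_T k)) x"
    for j
  have "gauss_conv \<sigma> (poly (chebyshev_T k)) x = (\<Sum>j\<in>{0..k}. t j)"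
    using gauss_conv_poly[OF assms, of "chebyshev_T k" "Suc k" x]
    unfolding t_def by (simp add: lessThan_Suc_atMost atMost_atLeast0)
  also have "\<dots> = t 0 + (\<Sum>j\<in>{1..k}. t j)"
    by (simp add: sum.atLeast_Suc_atMost)
  also have "\<dots> = poly (chebyshev_T k + gauss_correction \<sigma> k) x"
    unfolding t_def gauss_correction_def by (simp add: poly_sum)
  finally show ?thesis .
qed

lemma degree_chebyshev_T_add_gauss_correction:
  "degree (chebyshev_T k + gauss_correction \<sigma> k) = k"
proof (cases "k = 0")
  case False
  have "degree (gauss_correction \<sigma> k) \<le> k - 1"
    unfolding gauss_correction_def
  proof (rule degree_sum_le)
    fix j :: nat
    assume "j \<in> {1..k}"
    then have "degree ((pderiv ^^ (2 * j)) (chebyshev_T k)) \<le> k - 1"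
      by (simp add: degree_higher_pderiv) arith
    then show "degree (smult (\<sigma> ^ (2 * j) / (2 ^ j * fact j)) ((pderiv ^^ (2 * j)) (chebyshev_T k)))
        \<le> k - 1"
      using degree_smult_le order_trans by blast
  qed simp
  with False show ?thesis
    by (simp add: degree_add_eq_left)
qed (simp add: gauss_correction_def)

lemma nonneg_cheb_comb_gauss_correction: "nonneg_cheb_comb k (gauss_correction \<sigma> k)"
  unfolding gauss_correction_def
  by (intro nonneg_cheb_comb_sum nonneg_cheb_comb_smult nonneg_cheb_comb_higher_pderiv
      nonneg_cheb_comb_chebyshev_T) (simp_all add: power_mult)

lemma sum_half_powers_le: "(\<Sum>j\<in>{2..n}. (1/2::real) ^ (j + 1)) \<le> 1/4"
proof -
  have "(\<Sum>j\<in>{2..n}. (1/2::real) ^ (j + 1)) = 1/2 * (\<Sum>j\<in>{2..n}. (1/2) ^ j)"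
    by (simp add: sum_distrib_left)
  also have "\<dots> = (if n < 2 then 0 else 1/4 - (1/2) ^ (n + 1))"
    by (simp only: sum_gp) (simp add: power2_eq_square)
  also have "\<dots> \<le> 1/4"
    by simp
  finally show ?thesis .
qed

lemma gauss_correction_term_le:
  assumes "\<sigma> > 0" and "real k ^ 2 * \<sigma> \<le> 1" and "2 \<le> j"
  shows "\<sigma> ^ (2 * j) / (2 ^ j * fact j) * poly ((pderiv ^^ (2 * j)) (chebyshev_T k)) 1
    \<le> (real k ^ 2 * \<sigma>) ^ 2 * (1/2) ^ (j + 1)"
proof -
  define s where "s = real k ^ 2 * \<sigma>"
  have s: "0 \<le> s" "s \<le> 1"
    using assms unfolding s_def by auto
  have "(2::real) \<le> fact j"
    using fact_mono[OF assms(3)] by (simp add: numeral_2_eq_2)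
  have "\<sigma> ^ (2 * j) / (2 ^ j * fact j) * poly ((pderiv ^^ (2 * j)) (chebyshev_T k)) 1
      \<le> \<sigma> ^ (2 * j) / (2 ^ j * fact j) * real k ^ (2 * (2 * j))"
    using assms(1) by (intro mult_left_mono poly_higher_pderiv_chebyshev_T_one_le) simp
  also have "\<dots> = s ^ (2 * j) / (2 ^ j * fact j)"
    unfolding s_def by (simp add: power_mult_distrib power_mult[symmetric] mult.commute)
  also have "\<dots> \<le> s ^ 2 / (2 ^ j * fact j)"
    using s assms(3) by (intro divide_right_mono power_decreasing) auto
  also have "\<dots> \<le> s ^ 2 / (2 ^ j * 2)"
    using s \<open>2 \<le> fact j\<close> by (intro divide_left_mono mult_left_mono mult_pos_pos) auto
  also have "\<dots> = s ^ 2 * (1/2) ^ (j + 1)"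
    by (simp add: power_divide field_simps)
  finally show ?thesis
    unfolding s_def .
qed

text \<open>The \<open>j = 1\<close> term is bounded with the exact value \<open>T\<^sub>k''(1) = k\<^sup>2(k\<^sup>2 - 1)/3\<close>; the
  cruder Markov bound \<open>k\<^sup>4\<close> would give \<open>k\<^sup>4\<sigma>\<^sup>2/2\<close> for it alone.\<close>
lemma poly_gauss_correction_one_le:
  assumes "\<sigma> > 0" and "real k ^ 2 * \<sigma> \<le> 1"
  shows "poly (gauss_correction \<sigma> k) 1 \<le> 1/2 * real k ^ 4 * \<sigma> ^ 2"
proof (cases "k = 0")
  case False
  define t where "t j = \<sigma> ^ (2 * j) / (2 ^ j * fact j) * poly ((pderiv ^^ (2 * j)) (chebyshev_T k)) 1"
    for j
  have "poly (gauss_correction \<sigma> k) 1 = t 1 + (\<Sum>j\<in>{2..k}. t j)"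
    using False unfolding gauss_correction_def t_def
    by (simp add: poly_sum sum.atLeast_Suc_atMost numeral_2_eq_2)
  also have "t 1 \<le> real k ^ 4 * \<sigma> ^ 2 / 6"
  proof -
    have "3 * poly (pderiv (pderiv (chebyshev_T k))) 1 = real k ^ 4 - real k ^ 2"
      using poly_pderiv2_chebyshev_T_one[of k] by (simp add: right_diff_distrib flip: power_add)
    then have "3 * poly (pderiv (pderiv (chebyshev_T k))) 1 \<le> real k ^ 4"
      by simp
    from mult_left_mono[OF this, of "\<sigma> ^ 2 / 6"] show ?thesis
      unfolding t_def by (simp add: numeral_2_eq_2 field_simps)
  qed
  also have "(\<Sum>j\<in>{2..k}. t j) \<le> (\<Sum>j\<in>{2..k}. (real k ^ 2 * \<sigma>) ^ 2 * (1/2) ^ (j + 1))"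
    unfolding t_def using assms by (intro sum_mono gauss_correction_term_le) auto
  also have "\<dots> \<le> (real k ^ 2 * \<sigma>) ^ 2 * (1/4)"
    unfolding sum_distrib_left[symmetric] by (intro mult_left_mono sum_half_powers_le) simp
  finally have "poly (gauss_correction \<sigma> k) 1
      \<le> real k ^ 4 * \<sigma> ^ 2 / 6 + (real k ^ 2 * \<sigma>) ^ 2 * (1/4)"
    by simp
  moreover have "(real k ^ 2 * \<sigma>) ^ 2 = real k ^ 4 * \<sigma> ^ 2"
    by (simp add: power_mult_distrib flip: power_mult)
  moreover have "0 \<le> real k ^ 4 * \<sigma> ^ 2"
    by simp
  ultimately show ?thesis
    by linarith
qed (simp add: gauss_correction_def)

lemma half_power_4_le_powr: "1/2 * real k ^ 4 \<le> real k powr (9/2)"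
proof (cases "k = 0")
  case False
  then have "real k ^ 4 = real k powr 4"
    by (simp add: powr_realpow)
  also have "\<dots> \<le> real k powr (9/2)"
    using False by (intro powr_mono) auto
  finally show ?thesis
    using zero_le_power[of "real k" 4] by linarith
qed simp

theorem lemma9:
  fixes \<sigma> :: real and k :: nat
  assumes "\<sigma> > 0" and "real k ^ 2 * \<sigma> \<le> 1"
  shows "\<exists>q :: real poly. degree q = k \<and>
           (\<forall>x. gauss_conv \<sigma> (poly (cheb_T k)) x = poly q x) \<and>
           sup_norm_11 (\<lambda>x. poly (cheb_T k) x - gauss_conv \<sigma> (poly (cheb_T k)) x)
             \<le> 1/2 * real k ^ 4 * \<sigma>^2 \<and>
           cheb_norm1 (q - cheb_T k) \<le> real k powr (9/2) * \<sigma>^2"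
proof -
  define D where "D = gauss_correction \<sigma> k"
  have conv: "gauss_conv \<sigma> (poly (chebyshev_T k)) x = poly (chebyshev_T k + D) x" for x
    unfolding D_def using assms(1) by (rule gauss_conv_chebyshev_T)
  have D: "nonneg_cheb_comb k D"
    unfolding D_def by (rule nonneg_cheb_comb_gauss_correction)
  have D_one: "poly D 1 \<le> 1/2 * real k ^ 4 * \<sigma>^2"
    unfolding D_def using assms by (rule poly_gauss_correction_one_le)
  have "sup_norm_11 (\<lambda>x. poly (chebyshev_T k) x - gauss_conv \<sigma> (poly (chebyshev_T k)) x) \<le> poly D 1"
    unfolding sup_norm_11_def conv using nonneg_cheb_comb_abs_poly_le[OF D]
    by (intro cSUP_least) auto
  moreover have "1/2 * real k ^ 4 * \<sigma>^2 \<le> real k powr (9/2) * \<sigma>^2"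
    by (intro mult_right_mono half_power_4_le_powr) simp
  moreover have "cheb_norm1 (chebyshev_T k + D - chebyshev_T k) = poly D 1"
    using cheb_norm1_nonneg_cheb_comb[OF D] by simp
  ultimately show ?thesis
    unfolding cheb_T_eq_chebyshev_T using conv D_one degree_chebyshev_T_add_gauss_correction[of k \<sigma>]
    by (intro exI[of _ "chebyshev_T k + D"]) (simp add: D_def)
qed

end
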